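(* Let $M\ge2$ and let $\mathcal{P}$ be a convex Class I source set on $\{1,\dots,M\}$ (so $\mathcal{P}$ contains the uniform distribution). Then for $D\in[0,1]$, \[ \epsilon^*_{\mathrm{IT}}(\mathcal{P},D)=\begin{cases}\log M-H(D)-D\log(M-1), & D<\frac{M-1}{M},\\ 0, & D\ge\frac{M-1}{M},\end{cases} \] where $H(D)=-D\log D-(1-D)\log(1-D)$ is the binary entropy function.
   Context: A source set is a nonempty set $\mathcal{P}$ of probability distributions on $\{1,\dots,M\}$; it is Class I if its convex hull contains the uniform distribution $(1/M,\dots,1/M)$. A mechanism is an $M\times M$ row-stochastic matrix $Q$ with entries $Q(j|i)$; its diagonal distortions are $D_i=1-Q(i|i)$. $Q$ is $(\mathcal{P},D)$-valid if $\sum_iP_iD_i\le D$ for all $P\in\mathcal{P}$ (average Hamming distortion); $\mathcal{Q}(\mathcal{P},D)$ is the set of these. For a source distribution $P$ and mechanism $Q$, $I(P;Q)$ is the mutual information $I(X;\hat X)$ when $X\sim P$ and $\hat X$ is drawn from $Q(\cdot|X)$. The worst-case information-theoretic leakage is $\epsilon_{\mathrm{IT}}(Q)=\max_{P\in\mathcal{P}}I(P;Q)$ and $\epsilon^*_{\mathrm{IT}}(\mathcal{P},D)=\min_{Q\in\mathcal{Q}(\mathcal{P},D)}\epsilon_{\mathrm{IT}}(Q)$. *)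

theory Defs
  imports Complex_Main
begin

text \<open>Alphabet {1..M}. Distributions and mechanisms are real-valued functions on nat,
  only their values on {1..M} are relevant (distributions are required to vanish outside).\<close>

definition is_dist :: "nat \<Rightarrow> (nat \<Rightarrow> real) \<Rightarrow> bool" where
  "is_dist M P \<longleftrightarrow> (\<forall>i\<in>{1..M}. 0 \<le> P i) \<and> (\<forall>i. i \<notin> {1..M} \<longrightarrow> P i = 0)
      \<and> (\<Sum>i=1..M. P i) = 1"

definition uniform_dist :: "nat \<Rightarrow> nat \<Rightarrow> real" where
  "uniform_dist M = (\<lambda>i. if i \<in> {1..M} then 1 / real M else 0)"

definition source_set :: "nat \<Rightarrow> (nat \<Rightarrow> real) set \<Rightarrow> bool" where
  "source_set M \<P> \<longleftrightarrow> \<P> \<noteq> {} \<and> (\<forall>P\<in>\<P>. is_dist M P)"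

definition convex_fset :: "(nat \<Rightarrow> real) set \<Rightarrow> bool" where
  "convex_fset S \<longleftrightarrow> (\<forall>P\<in>S. \<forall>P'\<in>S. \<forall>t::real. 0 \<le> t \<and> t \<le> 1 \<longrightarrow>
      (\<lambda>i. t * P i + (1 - t) * P' i) \<in> S)"

definition in_convex_hull :: "(nat \<Rightarrow> real) \<Rightarrow> (nat \<Rightarrow> real) set \<Rightarrow> bool" where
  "in_convex_hull x S \<longleftrightarrow> (\<exists>n::nat. \<exists>w::nat \<Rightarrow> real. \<exists>v::nat \<Rightarrow> (nat \<Rightarrow> real).
      (\<forall>k<n. 0 \<le> w k \<and> v k \<in> S) \<and> (\<Sum>k<n. w k) = 1 \<and> x = (\<lambda>i. \<Sum>k<n. w k * v k i))"

definition class_I :: "nat \<Rightarrow> (nat \<Rightarrow> real) set \<Rightarrow> bool" where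
  "class_I M \<P> \<longleftrightarrow> in_convex_hull (uniform_dist M) \<P>"

text \<open>Mechanism: Q i j = Q(j|i), row-stochastic on {1..M}.\<close>
definition mechanism :: "nat \<Rightarrow> (nat \<Rightarrow> nat \<Rightarrow> real) \<Rightarrow> bool" where
  "mechanism M Q \<longleftrightarrow> (\<forall>i\<in>{1..M}. (\<forall>j\<in>{1..M}. 0 \<le> Q i j) \<and> (\<Sum>j=1..M. Q i j) = 1)"

definition diag_dist :: "(nat \<Rightarrow> nat \<Rightarrow> real) \<Rightarrow> nat \<Rightarrow> real" where
  "diag_dist Q i = 1 - Q i i"

definition valid_mech :: "nat \<Rightarrow> (nat \<Rightarrow> real) set \<Rightarrow> real \<Rightarrow> (nat \<Rightarrow> nat \<Rightarrow> real) \<Rightarrow> bool" where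
  "valid_mech M \<P> D Q \<longleftrightarrow> mechanism M Q \<and> (\<forall>P\<in>\<P>. (\<Sum>i=1..M. P i * diag_dist Q i) \<le> D)"

definition valid_set :: "nat \<Rightarrow> (nat \<Rightarrow> real) set \<Rightarrow> real \<Rightarrow> (nat \<Rightarrow> nat \<Rightarrow> real) set" where
  "valid_set M \<P> D = {Q. valid_mech M \<P> D Q}"

definition mutual_info :: "nat \<Rightarrow> (nat \<Rightarrow> real) \<Rightarrow> (nat \<Rightarrow> nat \<Rightarrow> real) \<Rightarrow> real" where
  "mutual_info M P Q = (\<Sum>i=1..M. \<Sum>j=1..M.
      (let pij = P i * Q i j; qj = (\<Sum>k=1..M. P k * Q k j)
       in if pij = 0 then 0 else pij * ln (Q i j / qj)))"

definition eps_IT :: "nat \<Rightarrow> (nat \<Rightarrow> real) set \<Rightarrow> (nat \<Rightarrow> nat \<Rightarrow> real) \<Rightarrow> real" where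
  "eps_IT M \<P> Q = (SUP P\<in>\<P>. mutual_info M P Q)"

definition eps_star_IT :: "nat \<Rightarrow> (nat \<Rightarrow> real) set \<Rightarrow> real \<Rightarrow> real" where
  "eps_star_IT M \<P> D = (INF Q\<in>valid_set M \<P> D. eps_IT M \<P> Q)"

definition xlnx :: "real \<Rightarrow> real" where
  "xlnx x = (if x = 0 then 0 else x * ln x)"

definition bin_entropy :: "real \<Rightarrow> real" where
  "bin_entropy D = - xlnx D - xlnx (1 - D)"

end

theory Submission
  imports Defs
begin

text \<open>Write \<open>I(X;Y) = H(Y) - H(Y|X)\<close> for the output \<open>Y\<close> of a mechanism.  Since \<open>H(Y) \<le> ln M\<close>,
  the symmetric channel, which keeps the input with probability \<open>1 - d\<close> and otherwise moves it
  uniformly to one of the other \<open>M - 1\<close> symbols, leaks at most \<open>ln M - H(d) - d ln (M - 1)\<close>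
  on every source, and its distortion is \<open>d\<close> on every source; take \<open>d = min D ((M - 1)/M)\<close>.
  Conversely, convexity and the Class I hypothesis put the uniform distribution into the source
  set, so every valid mechanism has distortion at most \<open>D\<close> on it.  The variational lower bound
  \<open>I(X;Y) \<ge> H(X) + E ln t(X|Y)\<close>, with the symmetric channel as backward channel \<open>t\<close>, turns this
  into Fano's bound \<open>I(X;Y) \<ge> ln M - H(D) - D ln (M - 1)\<close> for the uniform source.  So the
  symmetric channel and the uniform source form a saddle point of the min-max problem.\<close>

lemma xlnx_eq_mult_ln: "xlnx x = x * ln x"
  by (simp add: xlnx_def)

lemma mult_ln_div_le_diff:
  fixes x y :: real
  assumes "0 \<le> x" "0 < y"
  shows "x * ln (y / x) \<le> y - x"
proof (cases "x = 0")
  case False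
  with assms have "x > 0" by simp
  have "ln (y / x) \<le> y / x - 1"
    using \<open>x > 0\<close> assms by (intro ln_le_minus_one) simp
  then have "x * ln (y / x) \<le> x * (y / x - 1)"
    using \<open>x > 0\<close> by (simp add: mult_left_mono)
  also have "\<dots> = y - x" using \<open>x > 0\<close> by (simp add: field_simps)
  finally show ?thesis .
qed (use assms in simp)

lemma sum_if_eq_else:
  fixes a b :: real
  assumes "i \<in> {1..M}"
  shows "(\<Sum>j=1..M. if i = j then a else b) = a + (real M - 1) * b"
proof -
  have "(\<Sum>j=1..M. if i = j then a else b) = (\<Sum>j=1..M. b + (if i = j then a - b else 0))"
    by (rule sum.cong) auto
  then show ?thesis using assms by (simp add: sum.distrib algebra_simps)
qed

definition entropy :: "nat \<Rightarrow> (nat \<Rightarrow> real) \<Rightarrow> real" where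
  "entropy M P = - (\<Sum>i=1..M. xlnx (P i))"

definition cond_entropy :: "nat \<Rightarrow> (nat \<Rightarrow> real) \<Rightarrow> (nat \<Rightarrow> nat \<Rightarrow> real) \<Rightarrow> real" where
  "cond_entropy M P Q = - (\<Sum>i=1..M. P i * (\<Sum>j=1..M. xlnx (Q i j)))"

definition output_prob :: "nat \<Rightarrow> (nat \<Rightarrow> real) \<Rightarrow> (nat \<Rightarrow> nat \<Rightarrow> real) \<Rightarrow> nat \<Rightarrow> real" where
  "output_prob M P Q j = (\<Sum>i=1..M. P i * Q i j)"

lemma is_dist_nonneg: "is_dist M P \<Longrightarrow> i \<in> {1..M} \<Longrightarrow> 0 \<le> P i"
  by (simp add: is_dist_def)

lemma is_dist_sum: "is_dist M P \<Longrightarrow> (\<Sum>i=1..M. P i) = 1"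
  by (simp add: is_dist_def)

lemma mechanism_nonneg: "mechanism M Q \<Longrightarrow> i \<in> {1..M} \<Longrightarrow> j \<in> {1..M} \<Longrightarrow> 0 \<le> Q i j"
  by (simp add: mechanism_def)

lemma mechanism_row_sum: "mechanism M Q \<Longrightarrow> i \<in> {1..M} \<Longrightarrow> (\<Sum>j=1..M. Q i j) = 1"
  by (simp add: mechanism_def)

lemma mechanism_le_one:
  assumes "mechanism M Q" "i \<in> {1..M}" "j \<in> {1..M}"
  shows "Q i j \<le> 1"
proof -
  have "Q i j \<le> (\<Sum>k=1..M. Q i k)"
    using assms by (intro member_le_sum) (auto simp: mechanism_nonneg)
  with mechanism_row_sum[OF assms(1,2)] show ?thesis by simp
qed

lemma sum_mechanism_rows:
  assumes "mechanism M Q"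
  shows "(\<Sum>i=1..M. \<Sum>j=1..M. f i * Q i j) = (\<Sum>i=1..M. f i)"
proof (rule sum.cong[OF refl])
  fix i assume "i \<in> {1..M}"
  with mechanism_row_sum[OF assms this] show "(\<Sum>j=1..M. f i * Q i j) = f i"
    by (simp flip: sum_distrib_left)
qed

lemma sum_mechanism_diag_off_diag:
  assumes "mechanism M Q"
  shows "(\<Sum>i=1..M. \<Sum>j=1..M. P i * Q i j * (if i = j then a else b))
    = a * (\<Sum>i=1..M. P i) - (a - b) * (\<Sum>i=1..M. P i * diag_dist Q i)"
proof -
  have row: "(\<Sum>j=1..M. Q i j * (if i = j then a else b)) = a - (a - b) * diag_dist Q i"
    if "i \<in> {1..M}" for i
  proof -
    have "(\<Sum>j=1..M. Q i j * (if i = j then a else b))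
        = (\<Sum>j=1..M. b * Q i j + (if i = j then (a - b) * Q i j else 0))"
      by (rule sum.cong) (auto simp: algebra_simps)
    also have "\<dots> = b + (a - b) * Q i i"
      using mechanism_row_sum[OF assms that] that by (simp add: sum.distrib flip: sum_distrib_left)
    finally show ?thesis by (simp add: diag_dist_def algebra_simps)
  qed
  have "(\<Sum>i=1..M. \<Sum>j=1..M. P i * Q i j * (if i = j then a else b))
      = (\<Sum>i=1..M. P i * (a - (a - b) * diag_dist Q i))"
  proof (rule sum.cong[OF refl])
    fix i assume "i \<in> {1..M}"
    with row[OF this] show "(\<Sum>j=1..M. P i * Q i j * (if i = j then a else b))
        = P i * (a - (a - b) * diag_dist Q i)"
      by (simp add: mult.assoc flip: sum_distrib_left)
  qed
  also have "\<dots> = (\<Sum>i=1..M. a * P i) - (\<Sum>i=1..M. (a - b) * (P i * diag_dist Q i))"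
    by (simp add: sum_subtractf sum.distrib algebra_simps)
  finally show ?thesis by (simp flip: sum_distrib_left)
qed

lemma no_distortion_off_diag_zero:
  assumes P: "is_dist M P" and Q: "mechanism M Q"
    and dist: "(\<Sum>k=1..M. P k * diag_dist Q k) \<le> 0"
    and ij: "i \<in> {1..M}" "j \<in> {1..M}" "i \<noteq> j" and "P i \<noteq> 0"
  shows "Q i j = 0"
proof -
  have "\<forall>k\<in>{1..M}. 0 \<le> P k * diag_dist Q k"
    using P Q by (auto simp: diag_dist_def is_dist_nonneg mechanism_le_one)
  then have "\<forall>k\<in>{1..M}. P k * diag_dist Q k = 0"
    using dist sum_nonneg[of "{1..M}" "\<lambda>k. P k * diag_dist Q k"]
    by (subst sum_nonneg_eq_0_iff[symmetric]) auto
  then have "Q i i = 1" using ij \<open>P i \<noteq> 0\<close> by (force simp: diag_dist_def)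
  have "(\<Sum>k\<in>{i, j}. Q i k) \<le> (\<Sum>k=1..M. Q i k)"
    using Q ij by (intro sum_mono2) (auto simp: mechanism_nonneg)
  then have "Q i j \<le> 0" using ij \<open>Q i i = 1\<close> mechanism_row_sum[OF Q ij(1)] by simp
  then show ?thesis using Q ij mechanism_nonneg by force
qed

lemma output_prob_nonneg:
  "is_dist M P \<Longrightarrow> mechanism M Q \<Longrightarrow> j \<in> {1..M} \<Longrightarrow> 0 \<le> output_prob M P Q j"
  unfolding output_prob_def by (intro sum_nonneg) (simp add: is_dist_nonneg mechanism_nonneg)

lemma joint_le_output_prob:
  assumes "is_dist M P" "mechanism M Q" "i \<in> {1..M}" "j \<in> {1..M}"
  shows "P i * Q i j \<le> output_prob M P Q j"
  unfolding output_prob_def using assms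
  by (intro member_le_sum[where f = "\<lambda>k. P k * Q k j"]) (auto simp: is_dist_nonneg mechanism_nonneg)

lemma sum_joint_eq_one:
  assumes "is_dist M P" "mechanism M Q"
  shows "(\<Sum>i=1..M. \<Sum>j=1..M. P i * Q i j) = 1"
  using sum_mechanism_rows[OF assms(2), of P] is_dist_sum[OF assms(1)] by simp

lemma sum_output_prob:
  assumes "is_dist M P" "mechanism M Q"
  shows "(\<Sum>j=1..M. output_prob M P Q j) = 1"
  unfolding output_prob_def
  using sum_joint_eq_one[OF assms] sum.swap[of "\<lambda>i j. P i * Q i j" "{1..M}" "{1..M}"] by simp

lemma mutual_info_eq:
  "mutual_info M P Q = (\<Sum>i=1..M. \<Sum>j=1..M. P i * Q i j * ln (Q i j / output_prob M P Q j))"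
  unfolding mutual_info_def output_prob_def Let_def by (intro sum.cong refl) simp

lemma mutual_info_eq_entropy_minus_cond_entropy:
  assumes P: "is_dist M P" and Q: "mechanism M Q"
  shows "mutual_info M P Q = entropy M (output_prob M P Q) - cond_entropy M P Q"
proof -
  let ?q = "output_prob M P Q"
  have pointwise: "P i * Q i j * ln (Q i j / ?q j) = P i * xlnx (Q i j) - P i * Q i j * ln (?q j)"
    if ij: "i \<in> {1..M}" "j \<in> {1..M}" for i j
  proof (cases "P i * Q i j = 0")
    case False
    then have "?q j \<noteq> 0"
      using joint_le_output_prob[OF P Q ij] is_dist_nonneg[OF P ij(1)] mechanism_nonneg[OF Q ij]
      by (metis mult_nonneg_nonneg order_antisym_conv)
    with False show ?thesis by (simp add: ln_div xlnx_eq_mult_ln algebra_simps)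
  qed (auto simp: xlnx_eq_mult_ln)
  have "mutual_info M P Q
      = (\<Sum>i=1..M. \<Sum>j=1..M. P i * xlnx (Q i j) - P i * Q i j * ln (?q j))"
    unfolding mutual_info_eq by (intro sum.cong refl pointwise) auto
  also have "\<dots> = - cond_entropy M P Q - (\<Sum>i=1..M. \<Sum>j=1..M. P i * Q i j * ln (?q j))"
    unfolding cond_entropy_def by (simp add: sum_subtractf sum_distrib_left)
  also have "(\<Sum>i=1..M. \<Sum>j=1..M. P i * Q i j * ln (?q j)) = - entropy M ?q"
    unfolding entropy_def
    by (subst sum.swap) (simp add: xlnx_eq_mult_ln output_prob_def sum_distrib_right)
  finally show ?thesis by simp
qed

lemma entropy_le_ln_card:
  assumes nonneg: "\<forall>i\<in>{1..M}. 0 \<le> p i" and sum_one: "(\<Sum>i=1..M. p i) = 1"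
  shows "entropy M p \<le> ln M"
proof -
  have "M \<noteq> 0" using sum_one by (cases M) auto
  then have M_pos: "real M > 0" by simp
  have pointwise: "- xlnx (p i) - p i * ln M \<le> 1 / M - p i" if "i \<in> {1..M}" for i
  proof -
    have "p i * ln ((1 / M) / p i) = - xlnx (p i) - p i * ln M"
      using M_pos by (cases "p i = 0") (simp_all add: ln_div ln_mult xlnx_eq_mult_ln algebra_simps)
    moreover have "p i * ln ((1 / M) / p i) \<le> 1 / M - p i"
      using nonneg that M_pos by (intro mult_ln_div_le_diff) auto
    ultimately show ?thesis by simp
  qed
  have "(\<Sum>i=1..M. - xlnx (p i) - p i * ln M) \<le> (\<Sum>i=1..M. 1 / M - p i)"
    by (intro sum_mono pointwise)
  then show ?thesis
    using M_pos sum_one by (simp add: entropy_def sum_subtractf sum_negf flip: sum_distrib_right)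
qed

lemma cond_entropy_nonneg:
  assumes P: "is_dist M P" and Q: "mechanism M Q"
  shows "0 \<le> cond_entropy M P Q"
proof -
  have "xlnx (Q i j) \<le> 0" if "i \<in> {1..M}" "j \<in> {1..M}" for i j
  proof (cases "Q i j = 0")
    case False
    then have "ln (Q i j) \<le> 0"
      using mechanism_nonneg[OF Q that] mechanism_le_one[OF Q that] by simp
    then show ?thesis
      using mechanism_nonneg[OF Q that] by (simp add: xlnx_eq_mult_ln mult_nonneg_nonpos)
  qed (simp add: xlnx_def)
  then show ?thesis
    unfolding cond_entropy_def using is_dist_nonneg[OF P]
    by (auto intro!: sum_nonpos mult_nonneg_nonpos)
qed

lemma mutual_info_le_ln_card_minus_cond_entropy:
  assumes "is_dist M P" "mechanism M Q"
  shows "mutual_info M P Q \<le> ln M - cond_entropy M P Q"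
proof -
  have "entropy M (output_prob M P Q) \<le> ln M"
    using assms by (intro entropy_le_ln_card output_prob_nonneg sum_output_prob ballI)
  then show ?thesis using mutual_info_eq_entropy_minus_cond_entropy[OF assms] by simp
qed

lemma mutual_info_le_ln_card:
  "is_dist M P \<Longrightarrow> mechanism M Q \<Longrightarrow> mutual_info M P Q \<le> ln M"
  using mutual_info_le_ln_card_minus_cond_entropy cond_entropy_nonneg by fastforce

lemma mutual_info_ge_backward_channel:
  assumes P: "is_dist M P" and Q: "mechanism M Q"
    and t_nonneg: "\<forall>i\<in>{1..M}. \<forall>j\<in>{1..M}. 0 \<le> t i j"
    and t_col: "\<forall>j\<in>{1..M}. (\<Sum>i=1..M. t i j) \<le> 1"
    and t_pos: "\<forall>i\<in>{1..M}. \<forall>j\<in>{1..M}. P i * Q i j \<noteq> 0 \<longrightarrow> 0 < t i j"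
  shows "entropy M P + (\<Sum>i=1..M. \<Sum>j=1..M. P i * Q i j * ln (t i j)) \<le> mutual_info M P Q"
proof -
  let ?q = "output_prob M P Q"
  have pointwise: "P i * Q i j * ln (t i j) - xlnx (P i) * Q i j
      \<le> P i * Q i j * ln (Q i j / ?q j) + (?q j * t i j - P i * Q i j)"
    if ij: "i \<in> {1..M}" "j \<in> {1..M}" for i j
  proof (cases "P i * Q i j = 0")
    case True
    then show ?thesis
      using output_prob_nonneg[OF P Q ij(2)] t_nonneg ij by (auto simp: xlnx_eq_mult_ln)
  next
    case False
    have pos: "0 < P i" "0 < Q i j" "0 < t i j"
      using False is_dist_nonneg[OF P ij(1)] mechanism_nonneg[OF Q ij] t_pos ij by auto
    moreover have "0 < ?q j"
      using joint_le_output_prob[OF P Q ij] pos by (smt (verit) mult_pos_pos)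
    ultimately have "P i * Q i j * (ln (?q j) + ln (t i j) - ln (P i) - ln (Q i j))
        \<le> ?q j * t i j - P i * Q i j"
      using mult_ln_div_le_diff[of "P i * Q i j" "?q j * t i j"] by (simp add: ln_div ln_mult algebra_simps)
    with pos \<open>0 < ?q j\<close> show ?thesis by (simp add: ln_div xlnx_eq_mult_ln algebra_simps)
  qed
  have "(\<Sum>i=1..M. \<Sum>j=1..M. P i * Q i j * ln (t i j) - xlnx (P i) * Q i j)
      \<le> (\<Sum>i=1..M. \<Sum>j=1..M. P i * Q i j * ln (Q i j / ?q j) + (?q j * t i j - P i * Q i j))"
    by (intro sum_mono pointwise)
  then have "(\<Sum>i=1..M. \<Sum>j=1..M. P i * Q i j * ln (t i j)) - (\<Sum>i=1..M. \<Sum>j=1..M. xlnx (P i) * Q i j)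
      \<le> mutual_info M P Q + ((\<Sum>i=1..M. \<Sum>j=1..M. ?q j * t i j) - 1)"
    using sum_joint_eq_one[OF P Q] by (simp add: mutual_info_eq sum.distrib sum_subtractf)
  moreover have "(\<Sum>i=1..M. \<Sum>j=1..M. ?q j * t i j) \<le> 1"
  proof -
    have "(\<Sum>i=1..M. \<Sum>j=1..M. ?q j * t i j) = (\<Sum>j=1..M. ?q j * (\<Sum>i=1..M. t i j))"
      by (subst sum.swap) (simp add: sum_distrib_left)
    also have "\<dots> \<le> (\<Sum>j=1..M. ?q j)"
      using t_col output_prob_nonneg[OF P Q] by (intro sum_mono) (simp add: mult_left_le)
    finally show ?thesis using sum_output_prob[OF P Q] by simp
  qed
  moreover have "(\<Sum>i=1..M. \<Sum>j=1..M. xlnx (P i) * Q i j) = - entropy M P"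
    using sum_mechanism_rows[OF Q] by (simp add: entropy_def)
  ultimately show ?thesis by simp
qed

lemma mutual_info_nonneg:
  assumes P: "is_dist M P" and Q: "mechanism M Q"
  shows "0 \<le> mutual_info M P Q"
proof -
  have "entropy M P + (\<Sum>i=1..M. \<Sum>j=1..M. P i * Q i j * ln (P i)) \<le> mutual_info M P Q"
  proof (rule mutual_info_ge_backward_channel[OF P Q])
    show "\<forall>i\<in>{1..M}. \<forall>j\<in>{1..M}. 0 \<le> P i" using is_dist_nonneg[OF P] by blast
    show "\<forall>j\<in>{1..M}. (\<Sum>i=1..M. P i) \<le> 1" using is_dist_sum[OF P] by simp
    show "\<forall>i\<in>{1..M}. \<forall>j\<in>{1..M}. P i * Q i j \<noteq> 0 \<longrightarrow> 0 < P i"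
      using is_dist_nonneg[OF P] by (metis mult_zero_left order_le_less)
  qed
  moreover have "(\<Sum>i=1..M. \<Sum>j=1..M. P i * Q i j * ln (P i)) = - entropy M P"
    using sum_mechanism_rows[OF Q, of "\<lambda>i. xlnx (P i)"]
    by (simp add: entropy_def xlnx_eq_mult_ln mult.commute mult.left_commute)
  ultimately show ?thesis by simp
qed

definition sym_channel :: "nat \<Rightarrow> real \<Rightarrow> nat \<Rightarrow> nat \<Rightarrow> real" where
  "sym_channel M d i j = (if i = j then 1 - d else d / (real M - 1))"

lemma sum_sym_channel:
  assumes "M \<ge> 2" "i \<in> {1..M}"
  shows "(\<Sum>j=1..M. sym_channel M d i j) = 1" "(\<Sum>j=1..M. sym_channel M d j i) = 1"
proof -
  have "(real M - 1) * (d / (real M - 1)) = d" using assms(1) by simp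
  then show "(\<Sum>j=1..M. sym_channel M d i j) = 1"
    using sum_if_eq_else[OF assms(2), of "1 - d" "d / (real M - 1)"] by (simp add: sym_channel_def)
  then show "(\<Sum>j=1..M. sym_channel M d j i) = 1"
    by (simp add: sym_channel_def eq_commute[of i])
qed

lemma mechanism_sym_channel:
  assumes "M \<ge> 2" "0 \<le> d" "d \<le> 1"
  shows "mechanism M (sym_channel M d)"
  using assms sum_sym_channel(1)[OF assms(1)] by (auto simp: mechanism_def sym_channel_def)

lemma sym_channel_mem_valid_set:
  assumes "M \<ge> 2" "0 \<le> d" "d \<le> 1" "d \<le> D" and dists: "\<forall>P\<in>\<P>. is_dist M P"
  shows "sym_channel M d \<in> valid_set M \<P> D"
proof -
  have "(\<Sum>i=1..M. P i * diag_dist (sym_channel M d) i) = d" if "P \<in> \<P>" for P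
    using is_dist_sum[of M P] dists that
    by (simp add: diag_dist_def sym_channel_def flip: sum_distrib_right)
  then show ?thesis
    using assms mechanism_sym_channel[OF assms(1-3)] by (simp add: valid_set_def valid_mech_def)
qed

lemma cond_entropy_sym_channel:
  assumes M: "M \<ge> 2" and "0 \<le> d" and P: "is_dist M P"
  shows "cond_entropy M P (sym_channel M d) = bin_entropy d + d * ln (real M - 1)"
proof -
  have "d * ln (d / (real M - 1)) = xlnx d - d * ln (real M - 1)"
    using M by (cases "d = 0") (simp_all add: ln_div xlnx_eq_mult_ln algebra_simps)
  have row: "(\<Sum>j=1..M. xlnx (sym_channel M d i j)) = - bin_entropy d - d * ln (real M - 1)"
    if "i \<in> {1..M}" for i
  proof -
    have "(\<Sum>j=1..M. xlnx (sym_channel M d i j))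
        = (\<Sum>j=1..M. if i = j then xlnx (1 - d) else xlnx (d / (real M - 1)))"
      by (simp add: sym_channel_def if_distrib[of xlnx])
    also have "\<dots> = xlnx (1 - d) + (real M - 1) * xlnx (d / (real M - 1))"
      by (rule sum_if_eq_else[OF that])
    finally show ?thesis
      using M \<open>d * ln (d / (real M - 1)) = xlnx d - d * ln (real M - 1)\<close>
      by (simp add: bin_entropy_def xlnx_eq_mult_ln)
  qed
  have "cond_entropy M P (sym_channel M d) = - (\<Sum>i=1..M. P i * (- bin_entropy d - d * ln (real M - 1)))"
    unfolding cond_entropy_def using row by simp
  then show ?thesis using is_dist_sum[OF P] by (simp flip: sum_distrib_right)
qed

lemma mutual_info_sym_channel_le:
  assumes "M \<ge> 2" "0 \<le> d" "d \<le> 1" "is_dist M P"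
  shows "mutual_info M P (sym_channel M d) \<le> ln (real M) - bin_entropy d - d * ln (real M - 1)"
  using mutual_info_le_ln_card_minus_cond_entropy[OF assms(4) mechanism_sym_channel[OF assms(1-3)]]
    cond_entropy_sym_channel[OF assms(1,2,4)]
  by simp

lemma mutual_info_ge_fano:
  assumes M: "M \<ge> 2" and P: "is_dist M P" and Q: "mechanism M Q"
    and distortion: "(\<Sum>i=1..M. P i * diag_dist Q i) \<le> D"
    and D_nonneg: "0 \<le> D" and D_le: "D \<le> (real M - 1) / real M"
  shows "entropy M P - bin_entropy D - D * ln (real M - 1) \<le> mutual_info M P Q"
proof -
  define a where "a = ln (1 - D)"
  define b where "b = ln (D / (real M - 1))"
  define d where "d = (\<Sum>i=1..M. P i * diag_dist Q i)"
  have M_gt: "real M - 1 > 0" using M by simp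
  have D_scaled: "D * real M \<le> real M - 1" using D_le M by (simp add: field_simps)
  have "(real M - 1) / real M < 1" using M by simp
  then have D_lt: "D < 1" using D_le by linarith
  have "entropy M P + (\<Sum>i=1..M. \<Sum>j=1..M. P i * Q i j * ln (sym_channel M D i j)) \<le> mutual_info M P Q"
  proof (rule mutual_info_ge_backward_channel[OF P Q])
    show "\<forall>i\<in>{1..M}. \<forall>j\<in>{1..M}. 0 \<le> sym_channel M D i j"
      using D_nonneg D_lt M_gt by (simp add: sym_channel_def)
    show "\<forall>j\<in>{1..M}. (\<Sum>i=1..M. sym_channel M D i j) \<le> 1"
      using sum_sym_channel(2)[OF M] by simp
    show "\<forall>i\<in>{1..M}. \<forall>j\<in>{1..M}. P i * Q i j \<noteq> 0 \<longrightarrow> 0 < sym_channel M D i j"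
    proof (intro ballI impI)
      fix i j assume ij: "i \<in> {1..M}" "j \<in> {1..M}" and "P i * Q i j \<noteq> 0"
      \<comment> \<open>off-diagonal entries of the backward channel vanish only for \<open>D = 0\<close>,
        and then so do those of \<open>Q\<close> on the support of \<open>P\<close>\<close>
      then have "i \<noteq> j \<Longrightarrow> D \<noteq> 0"
        using no_distortion_off_diag_zero[OF P Q _ ij] distortion by force
      then show "0 < sym_channel M D i j"
        using D_nonneg D_lt M_gt by (auto simp: sym_channel_def)
    qed
  qed
  moreover have "(\<Sum>i=1..M. \<Sum>j=1..M. P i * Q i j * ln (sym_channel M D i j))
      = (\<Sum>i=1..M. \<Sum>j=1..M. P i * Q i j * (if i = j then a else b))"
    unfolding a_def b_def by (simp add: sym_channel_def if_distrib[of ln])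
  also have "\<dots> = a - (a - b) * d"
    using sum_mechanism_diag_off_diag[OF Q, of P a b] is_dist_sum[OF P] by (simp add: d_def)
  moreover have "(a - b) * d \<le> (a - b) * D"
  proof (intro mult_left_mono)
    show "d \<le> D" using distortion by (simp add: d_def)
    have "D \<le> (1 - D) * (real M - 1)" using D_scaled by (simp add: algebra_simps)
    then have "D / (real M - 1) \<le> 1 - D" using M_gt by (simp add: pos_divide_le_eq)
    then show "0 \<le> a - b"
      using D_nonneg D_lt M_gt by (cases "D = 0") (simp_all add: a_def b_def)
  qed
  moreover have "a - (a - b) * D = - bin_entropy D - D * ln (real M - 1)"
    using M_gt by (cases "D = 0")
      (simp_all add: a_def b_def bin_entropy_def xlnx_eq_mult_ln ln_div algebra_simps)
  ultimately show ?thesis by linarith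
qed

lemma uniform_dist_is_dist: "M \<ge> 1 \<Longrightarrow> is_dist M (uniform_dist M)"
  by (simp add: is_dist_def uniform_dist_def)

lemma entropy_uniform_dist: "entropy M (uniform_dist M) = ln (real M)"
  by (simp add: entropy_def uniform_dist_def xlnx_eq_mult_ln ln_div)

lemma convex_fset_sum:
  fixes n :: nat and w :: "nat \<Rightarrow> real" and v :: "nat \<Rightarrow> nat \<Rightarrow> real"
  assumes "convex_fset S"
  shows "\<forall>k<n. 0 \<le> w k \<and> v k \<in> S \<Longrightarrow> (\<Sum>k<n. w k) = 1 \<Longrightarrow> (\<lambda>i. \<Sum>k<n. w k * v k i) \<in> S"
proof (induction n arbitrary: w)
  case 0
  then show ?case by simp
next
  case (Suc n)
  define s where "s = (\<Sum>k<n. w k)"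
  have s_w: "s + w n = 1" using Suc.prems(2) by (simp add: s_def)
  have s_nonneg: "0 \<le> s" unfolding s_def using Suc.prems(1) by (intro sum_nonneg) simp
  have v_n: "v n \<in> S" "0 \<le> w n" using Suc.prems(1) by simp_all
  then have s_le: "s \<le> 1" using s_w by simp
  show ?case
  proof (cases "s = 0")
    case True
    then have "\<forall>k\<in>{..<n}. w k = 0"
      using Suc.prems(1) by (subst sum_nonneg_eq_0_iff[symmetric]) (auto simp: s_def)
    then have "(\<lambda>i. \<Sum>k<Suc n. w k * v k i) = v n" using s_w True by auto
    with v_n(1) show ?thesis by simp
  next
    case False
    then have "s > 0" using s_nonneg by simp
    have "(\<lambda>i. \<Sum>k<n. w k / s * v k i) \<in> S"
      using Suc.prems(1) \<open>s > 0\<close>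
      by (intro Suc.IH) (simp_all add: s_def field_simps flip: sum_divide_distrib)
    with assms v_n(1) s_nonneg s_le
    have "(\<lambda>i. s * (\<Sum>k<n. w k / s * v k i) + (1 - s) * v n i) \<in> S"
      unfolding convex_fset_def by (elim ballE allE[of _ s]) auto
    moreover have "(\<lambda>i. s * (\<Sum>k<n. w k / s * v k i) + (1 - s) * v n i) = (\<lambda>i. \<Sum>k<Suc n. w k * v k i)"
      using \<open>s > 0\<close> s_w by (auto simp: sum_distrib_left)
    ultimately show ?thesis by simp
  qed
qed

lemma uniform_dist_mem:
  assumes "convex_fset S" "class_I M S"
  shows "uniform_dist M \<in> S"
proof -
  obtain n :: nat and w :: "nat \<Rightarrow> real" and v :: "nat \<Rightarrow> nat \<Rightarrow> real"
    where "\<forall>k<n. 0 \<le> w k \<and> v k \<in> S" "(\<Sum>k<n. w k) = 1"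
      "uniform_dist M = (\<lambda>i. \<Sum>k<n. w k * v k i)"
    using assms(2) unfolding class_I_def in_convex_hull_def by blast
  then show ?thesis using convex_fset_sum[OF assms(1)] by simp
qed

lemma eps_star_IT_eqI:
  assumes dists: "\<forall>P\<in>\<P>. is_dist M P"
    and Q\<^sub>0: "Q\<^sub>0 \<in> valid_set M \<P> D" and Q\<^sub>0_le: "\<forall>P\<in>\<P>. mutual_info M P Q\<^sub>0 \<le> r"
    and P\<^sub>0: "P\<^sub>0 \<in> \<P>" and P\<^sub>0_ge: "\<forall>Q\<in>valid_set M \<P> D. r \<le> mutual_info M P\<^sub>0 Q"
  shows "eps_star_IT M \<P> D = r"
proof -
  have r_le: "r \<le> eps_IT M \<P> Q" if Q: "Q \<in> valid_set M \<P> D" for Q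
  proof -
    have "mechanism M Q" using Q by (simp add: valid_set_def valid_mech_def)
    then have "bdd_above ((\<lambda>P. mutual_info M P Q) ` \<P>)"
      using dists mutual_info_le_ln_card by (intro bdd_aboveI2) blast
    then have "mutual_info M P\<^sub>0 Q \<le> eps_IT M \<P> Q"
      unfolding eps_IT_def using P\<^sub>0 by (rule cSUP_upper2) simp
    then show ?thesis using P\<^sub>0_ge Q by force
  qed
  have "eps_IT M \<P> Q\<^sub>0 \<le> r"
    unfolding eps_IT_def using P\<^sub>0 Q\<^sub>0_le by (intro cSUP_least) auto
  moreover have "eps_star_IT M \<P> D \<le> eps_IT M \<P> Q\<^sub>0"
    unfolding eps_star_IT_def using Q\<^sub>0 r_le by (intro cINF_lower bdd_belowI2) auto
  moreover have "r \<le> eps_star_IT M \<P> D"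
    unfolding eps_star_IT_def using Q\<^sub>0 r_le by (intro cINF_greatest) auto
  ultimately show ?thesis by linarith
qed

lemma fano_bound_at_uniform_error_eq_zero:
  assumes "M \<ge> 2"
  shows "ln (real M) - bin_entropy ((real M - 1) / real M) - (real M - 1) / real M * ln (real M - 1) = 0"
proof -
  have M_gt: "real M - 1 > 0" using assms by simp
  have complement: "1 - (real M - 1) / real M = 1 / real M" using M_gt by (simp add: field_simps)
  have ln_error: "ln ((real M - 1) / real M) = ln (real M - 1) - ln (real M)"
    using M_gt by (simp add: ln_div)
  have ln_inverse: "ln (1 / real M) = - ln (real M)" by (simp add: ln_div)
  show ?thesis
    unfolding bin_entropy_def xlnx_eq_mult_ln complement ln_error ln_inverse
    using M_gt by (simp add: field_simps)
qed

lemma eps_star_IT_eq_fano_bound: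
  assumes M: "M \<ge> 2" and dists: "\<forall>P\<in>\<P>. is_dist M P" and uniform: "uniform_dist M \<in> \<P>"
    and "0 \<le> D" "D < (real M - 1) / real M"
  shows "eps_star_IT M \<P> D = ln (real M) - bin_entropy D - D * ln (real M - 1)"
proof (rule eps_star_IT_eqI[OF dists _ _ uniform])
  have "(real M - 1) / real M < 1" using M by simp
  then have "D \<le> 1" using assms(5) by linarith
  then show "sym_channel M D \<in> valid_set M \<P> D"
    using M \<open>0 \<le> D\<close> dists by (intro sym_channel_mem_valid_set) auto
  show "\<forall>P\<in>\<P>. mutual_info M P (sym_channel M D) \<le> ln (real M) - bin_entropy D - D * ln (real M - 1)"
    using mutual_info_sym_channel_le[OF M \<open>0 \<le> D\<close> \<open>D \<le> 1\<close>] dists by blast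
  show "\<forall>Q\<in>valid_set M \<P> D.
      ln (real M) - bin_entropy D - D * ln (real M - 1) \<le> mutual_info M (uniform_dist M) Q"
    using mutual_info_ge_fano[OF M uniform_dist_is_dist _ _ \<open>0 \<le> D\<close>] M assms(5) uniform
    by (simp add: valid_set_def valid_mech_def entropy_uniform_dist)
qed

lemma eps_star_IT_eq_zero:
  assumes M: "M \<ge> 2" and dists: "\<forall>P\<in>\<P>. is_dist M P" and uniform: "uniform_dist M \<in> \<P>"
    and "(real M - 1) / real M \<le> D"
  shows "eps_star_IT M \<P> D = 0"
proof (rule eps_star_IT_eqI[OF dists _ _ uniform])
  define d where "d = (real M - 1) / real M"
  have d: "0 \<le> d" "d \<le> 1" "d \<le> D" using assms(1,4) by (auto simp: d_def)
  show "sym_channel M d \<in> valid_set M \<P> D"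
    by (rule sym_channel_mem_valid_set[OF M d dists])
  show "\<forall>P\<in>\<P>. mutual_info M P (sym_channel M d) \<le> 0"
    using mutual_info_sym_channel_le[OF M d(1,2)] dists fano_bound_at_uniform_error_eq_zero[OF M]
    by (simp add: d_def)
  show "\<forall>Q\<in>valid_set M \<P> D. 0 \<le> mutual_info M (uniform_dist M) Q"
    using mutual_info_nonneg[OF uniform_dist_is_dist] M by (simp add: valid_set_def valid_mech_def)
qed

theorem lemma3:
  fixes M :: nat and \<P> :: "(nat \<Rightarrow> real) set" and D :: real
  assumes "M \<ge> 2" and "source_set M \<P>" and "convex_fset \<P>" and "class_I M \<P>"
    and "0 \<le> D" and "D \<le> 1"
  shows "eps_star_IT M \<P> D =
    (if D < (real M - 1) / real M
     then ln (real M) - bin_entropy D - D * ln (real M - 1)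
     else 0)"
proof -
  have dists: "\<forall>P\<in>\<P>. is_dist M P" using assms(2) by (simp add: source_set_def)
  have uniform: "uniform_dist M \<in> \<P>" using assms(3,4) by (rule uniform_dist_mem)
  show ?thesis
    using eps_star_IT_eq_fano_bound[OF assms(1) dists uniform assms(5)]
      eps_star_IT_eq_zero[OF assms(1) dists uniform]
    by simp
qed

end
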